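(* Let $d\ge3$ be odd. The $(d-1)+1$ stacked code (defined in the context) has a transversal logical $\pi/8$ gate: there is a tensor product of single-qubit diagonal $Z$-rotations $\bigotimes_{q}Z(\phi_q)$ over all physical qubits $q$ of the stacked code that acts on the code space as the logical gate $\mathrm{diag}[1,e^{i\pi/4}]$ (equivalently $\mathrm{diag}[e^{-i\pi/8},e^{i\pi/8}]$ up to global phase), possibly followed by a transversal logical $Z$.
   Context: $Z(\phi)=\mathrm{diag}[1,e^{i\pi\phi}]$. Hexagonal 2D color code: for odd $d$, the $[[n,1,d]]$ color code on the hexagonal lattice with triangular boundary, $n=(3d^2+1)/4$, with plaquette stabilizers $G_{P_i}=\bigotimes_{\nu\in P_i}X_\nu$, $H_{P_i}=\bigotimes_{\nu\in P_i}Z_\nu$ and logical operators $X_L=X^{\otimes n}$, $Z_L=Z^{\otimes n}$; fix weight-2 $Z$ edge operators $H_{e_i}$, one per plaquette $P_i$, meeting $P_i$ in exactly one qubit and generating together with the $Z$-plaquettes all $Z$ edge operators. Stacked code: $d-1$ copies (layers $l=1,\dots,d-1$, superscript $(l)$) of this code plus one extra qubit as layer $d$ with $X_L^{(d)}=X$, $Z_L^{(d)}=Z$; its stabilizer group is generated, for $k=1,\dots,(d-1)/2$ and all $i$, by $H_{e_i}^{(2k-1)}H_{e_i}^{(2k)}$, $H_{P_i}^{(2k-1)}$, $H_{P_i}^{(2k-1)}H_{P_i}^{(2k)}$, $G_{P_i}^{(2k-1)}G_{P_i}^{(2k)}$, $X_L^{(2k)}X_L^{(2k+1)}$, $Z_L^{(2k)}Z_L^{(2k+1)}$.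 It encodes one logical qubit with logical $X$ given by $X$ on all qubits and logical $Z$ given by $Z$ on all qubits. "Transversal" here means a product of single-qubit gates acting independently on each physical qubit (the rotation angles may differ between qubits). *)

theory Defs
  imports "HOL-Analysis.Analysis"
begin

text \<open>A pure state on the qubits of type 'q is a function from computational-basis
configurations ('q \<Rightarrow> bool, True = |1>) to amplitudes. For a finite qubit set S,
a state of the S-qubit system is such a function supported on configurations that
are False outside S.\<close>

type_synonym 'q state = "('q \<Rightarrow> bool) \<Rightarrow> complex"

definition flip :: "'q set \<Rightarrow> ('q \<Rightarrow> bool) \<Rightarrow> ('q \<Rightarrow> bool)" where
  "flip A x = (\<lambda>q. if q \<in> A then \<not> x q else x q)"

definition pauliX :: "'q set \<Rightarrow> 'q state \<Rightarrow> 'q state" where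
  "pauliX A \<psi> = (\<lambda>x. \<psi> (flip A x))"

definition pauliZ :: "'q set \<Rightarrow> 'q state \<Rightarrow> 'q state" where
  "pauliZ B \<psi> = (\<lambda>x. (-1) ^ card {q \<in> B. x q} * \<psi> x)"

definition supported_on :: "'q set \<Rightarrow> 'q state \<Rightarrow> bool" where
  "supported_on S \<psi> \<longleftrightarrow> (\<forall>x. \<psi> x \<noteq> 0 \<longrightarrow> {q. x q} \<subseteq> S)"

text \<open>Code space of a CSS stabilizer code on qubits S with X-type generators XG and
Z-type generators ZG (each generator given by its support): the joint +1 eigenspace.\<close>
definition code_space :: "'q set \<Rightarrow> 'q set set \<Rightarrow> 'q set set \<Rightarrow> 'q state set" where
  "code_space S XG ZG =
     {\<psi>. supported_on S \<psi> \<and> (\<forall>A\<in>XG. pauliX A \<psi> = \<psi>) \<and> (\<forall>B\<in>ZG. pauliZ B \<psi> = \<psi>)}"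

text \<open>Transversal diagonal rotation  \<Otimes>_{q\<in>S} Z(\<phi> q),  Z(\<phi>) = diag[1, e^{i \<pi> \<phi>}].\<close>
definition zrot :: "'q set \<Rightarrow> ('q \<Rightarrow> real) \<Rightarrow> 'q state \<Rightarrow> 'q state" where
  "zrot S \<phi> \<psi> = (\<lambda>x. cis (pi * (\<Sum>q\<in>{q \<in> S. x q}. \<phi> q)) * \<psi> x)"

text \<open>U acts on the code space C as the logical gate diag[1, e^{i\<theta>}] in the logical
basis diagonalising the logical Z operator ZL (|0_L> = +1 eigenvector), i.e. as the
operator (1+e^{i\<theta>})/2 I + (1-e^{i\<theta>})/2 ZL restricted to C.\<close>
definition acts_as_logical_phase ::
  "('q state \<Rightarrow> 'q state) \<Rightarrow> ('q state \<Rightarrow> 'q state) \<Rightarrow> real \<Rightarrow> 'q state set \<Rightarrow> bool" where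
  "acts_as_logical_phase U ZL \<theta> C \<longleftrightarrow>
     (\<forall>\<psi>\<in>C. \<forall>x. U \<psi> x = (1 + cis \<theta>) / 2 * \<psi> x + (1 - cis \<theta>) / 2 * ZL \<psi> x)"

text \<open>The group generated by Z-type Pauli operators (up to phase) corresponds to the
GF(2)-span of their supports under symmetric difference.\<close>
inductive_set f2span :: "'a set set \<Rightarrow> 'a set set" for G where
  zero: "{} \<in> f2span G"
| add: "A \<in> G \<Longrightarrow> B \<in> f2span G \<Longrightarrow> (A - B) \<union> (B - A) \<in> f2span G"

section \<open>The hexagonal (6.6.6) color code with triangular boundary\<close>

text \<open>Plaquette centres live on the triangular lattice, point (a,b) = a e1 + b e2 with
e1 = (1,0), e2 = (1/2, sqrt 3/2); the colour of (a,b) is (a-b) mod 3.  Qubits (vertices of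
the hexagonal lattice) are the unit triangles: (a,b,True) is the up-triangle with corners
(a,b),(a+1,b),(a,b+1), (a,b,False) the down-triangle with corners (a+1,b),(a,b+1),(a+1,b+1).
The code region is the big triangle bounded by the three monochromatic lines
a-b = 0, a+2b = 1, 2a+b = (3d+5)/2 (colours 0, 1, 2), for odd d.  Qubits are the unit
triangles inside the closed region; plaquettes are the lattice points strictly inside,
plaquette p being supported on the qubits having p as a corner.  For d = 3,5,7,... this
gives the [[(3d^2+1)/4, 1, d]] triangular colour code (7, 19, 37, ... qubits;
weight-4 boundary and weight-6 bulk plaquettes).\<close>

type_synonym cq = "int \<times> int \<times> bool"

definition tri_verts :: "cq \<Rightarrow> (int \<times> int) set" where
  "tri_verts t = (case t of (a, b, up) \<Rightarrow>
      if up then {(a, b), (a + 1, b), (a, b + 1)} else {(a + 1, b), (a, b + 1), (a + 1, b + 1)})"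

definition in_region :: "nat \<Rightarrow> int \<times> int \<Rightarrow> bool" where
  "in_region d p = (case p of (a, b) \<Rightarrow>
      0 \<le> a - b \<and> 1 \<le> a + 2 * b \<and> 2 * (2 * a + b) \<le> 3 * int d + 5)"

definition in_interior :: "nat \<Rightarrow> int \<times> int \<Rightarrow> bool" where
  "in_interior d p = (case p of (a, b) \<Rightarrow>
      0 < a - b \<and> 1 < a + 2 * b \<and> 2 * (2 * a + b) < 3 * int d + 5)"

definition cc_qubits :: "nat \<Rightarrow> cq set" where
  "cc_qubits d = {t. \<forall>p\<in>tri_verts t. in_region d p}"

definition cc_plaqs :: "nat \<Rightarrow> (int \<times> int) set" where
  "cc_plaqs d = {p. in_interior d p}"

definition plaq :: "nat \<Rightarrow> int \<times> int \<Rightarrow> cq set" where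
  "plaq d p = {t \<in> cc_qubits d. p \<in> tri_verts t}"

text \<open>Edges of the hexagonal lattice inside the code: pairs of qubits (unit triangles)
sharing a lattice edge.\<close>
definition cc_edges :: "nat \<Rightarrow> cq set set" where
  "cc_edges d = {{s, t} | s t. s \<in> cc_qubits d \<and> t \<in> cc_qubits d \<and> s \<noteq> t
                                \<and> card (tri_verts s \<inter> tri_verts t) = 2}"

definition valid_edge_choice :: "nat \<Rightarrow> (int \<times> int \<Rightarrow> cq set) \<Rightarrow> bool" where
  "valid_edge_choice d e \<longleftrightarrow>
     (\<forall>p\<in>cc_plaqs d. e p \<in> cc_edges d \<and> card (e p \<inter> plaq d p) = 1) \<and>
     cc_edges d \<subseteq> f2span (e ` cc_plaqs d \<union> plaq d ` cc_plaqs d)"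

text \<open>Stacked qubits: (l, q) with layer l \<in> {1..d-1} and q a colour-code qubit, plus the
single extra qubit (d, (0,0,True)) forming layer d.\<close>

type_synonym sq = "nat \<times> cq"

definition layer_qubits :: "nat \<Rightarrow> nat \<Rightarrow> cq set" where
  "layer_qubits d l = (if l = d then {(0, 0, True)} else cc_qubits d)"

definition stack_qubits :: "nat \<Rightarrow> sq set" where
  "stack_qubits d = {(l, q). 1 \<le> l \<and> l \<le> d \<and> q \<in> layer_qubits d l}"

definition lift :: "nat \<Rightarrow> cq set \<Rightarrow> sq set" where
  "lift l A = Pair l ` A"

text \<open>X-type generators: G_P^(2k-1) G_P^(2k) and X_L^(2k) X_L^(2k+1), k = 1..(d-1)/2.\<close>
definition stack_XG :: "nat \<Rightarrow> sq set set" where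
  "stack_XG d =
     {lift (2*k - 1) (plaq d p) \<union> lift (2*k) (plaq d p) | k p.
        1 \<le> k \<and> k \<le> (d - 1) div 2 \<and> p \<in> cc_plaqs d}
   \<union> {lift (2*k) (layer_qubits d (2*k)) \<union> lift (2*k + 1) (layer_qubits d (2*k + 1)) | k.
        1 \<le> k \<and> k \<le> (d - 1) div 2}"

text \<open>Z-type generators: H_e^(2k-1) H_e^(2k), H_P^(2k-1), H_P^(2k-1) H_P^(2k) and
Z_L^(2k) Z_L^(2k+1), k = 1..(d-1)/2.\<close>
definition stack_ZG :: "nat \<Rightarrow> (int \<times> int \<Rightarrow> cq set) \<Rightarrow> sq set set" where
  "stack_ZG d e =
     {lift (2*k - 1) (e p) \<union> lift (2*k) (e p) | k p.
        1 \<le> k \<and> k \<le> (d - 1) div 2 \<and> p \<in> cc_plaqs d}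
   \<union> {lift (2*k - 1) (plaq d p) | k p.
        1 \<le> k \<and> k \<le> (d - 1) div 2 \<and> p \<in> cc_plaqs d}
   \<union> {lift (2*k - 1) (plaq d p) \<union> lift (2*k) (plaq d p) | k p.
        1 \<le> k \<and> k \<le> (d - 1) div 2 \<and> p \<in> cc_plaqs d}
   \<union> {lift (2*k) (layer_qubits d (2*k)) \<union> lift (2*k + 1) (layer_qubits d (2*k + 1)) | k.
        1 \<le> k \<and> k \<le> (d - 1) div 2}"

definition stacked_code_space :: "nat \<Rightarrow> (int \<times> int \<Rightarrow> cq set) \<Rightarrow> sq state set" where
  "stacked_code_space d e = code_space (stack_qubits d) (stack_XG d) (stack_ZG d e)"

end

theory Submission
  imports Defs
begin

(* For a basis configuration in the support of a codeword let L_l be its set of 1-qubits on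
   layer l.  The Z-stabilizers force L_(2k-1) to meet every plaquette evenly, L_(2k) to equal
   L_(2k-1) or its complement (the plaquettes and the edge operators H_e generate all Z-edges,
   and the lattice is connected), and |L_(2k)| + |L_(2k+1)| to be even.  On the colour code a
   set meeting every plaquette evenly is a sum of plaquettes, possibly plus the boundary
   logical (Gaussian elimination with explicit triangular pivots); plaquettes have equally many
   qubits on both sublattices, so on such sets the signed count s(Z) = #up - #down is congruent
   mod 4 to the parity of |Z|.  With angles +-s(all) s(t)/4 on layers 2k-1 and 2k and 1/4 on the
   extra qubit, the phase contributed by layers 2k-1 and 2k is, modulo 2 pi, pi/4 times the
   difference of the parities of |L_(2k-1)| and |L_(2k+1)|; the sum telescopes to pi/4 times
   the parity of the total weight, which is the logical pi/8 gate. *)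


section \<open>Parities of symmetric differences and triangular elimination\<close>

lemma sum_sym_diff:
  fixes f :: "'a \<Rightarrow> 'b::comm_ring_1"
  assumes "finite A" "finite B"
  shows "sum f (sym_diff A B) = sum f A + sum f B - 2 * sum f (A \<inter> B)"
proof -
  have "sum f (sym_diff A B) = sum f (A - B) + sum f (B - A)"
    by (rule sum.union_disjoint) (use assms in auto)
  moreover have "sum f A = sum f (A - B) + sum f (A \<inter> B)"
    using sum.Int_Diff[OF assms(1), of f B] by simp
  moreover have "sum f B = sum f (B - A) + sum f (A \<inter> B)"
    using sum.Int_Diff[OF assms(2), of f A] by (simp add: Int_commute)
  ultimately show ?thesis by (simp add: algebra_simps)
qed

lemma card_sym_diff:
  assumes "finite A" "finite B"
  shows "int (card (sym_diff A B)) = int (card A) + int (card B) - 2 * int (card (A \<inter> B))"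
  using sum_sym_diff[OF assms, of "\<lambda>_. 1::int"] by simp

lemma even_card_sym_diff_Int_iff:
  assumes "finite A" "finite B"
  shows "even (card (sym_diff A B \<inter> C)) \<longleftrightarrow> even (card (A \<inter> C) + card (B \<inter> C))"
proof -
  have "sym_diff A B \<inter> C = sym_diff (A \<inter> C) (B \<inter> C)" by auto
  then have "int (card (sym_diff A B \<inter> C))
      = int (card (A \<inter> C)) + int (card (B \<inter> C)) - 2 * int (card (A \<inter> C \<inter> (B \<inter> C)))"
    using card_sym_diff[of "A \<inter> C" "B \<inter> C"] assms by simp
  then show ?thesis by presburger
qed

lemma even_card_Int_f2span:
  assumes gen: "\<And>A. A \<in> G \<Longrightarrow> finite A \<and> even (card (Y \<inter> A))" and "B \<in> f2span G"
  shows "finite B \<and> even (card (Y \<inter> B))"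
  using assms(2)
proof (induction B rule: f2span.induct)
  case zero
  then show ?case by simp
next
  case (add A B)
  have "finite A" "even (card (A \<inter> Y))" using gen[OF add.hyps(1)] by (auto simp: Int_commute)
  moreover have "finite B" "even (card (B \<inter> Y))" using add.IH by (auto simp: Int_commute)
  ultimately have "finite (sym_diff A B)" "even (card (sym_diff A B \<inter> Y))"
    by (simp_all add: even_card_sym_diff_Int_iff)
  then show ?case by (simp add: Int_commute)
qed

lemma even_card_Int_doubleton_iff:
  "s \<noteq> t \<Longrightarrow> even (card (Y \<inter> {s, t})) \<longleftrightarrow> (s \<in> Y \<longleftrightarrow> t \<in> Y)"
  by (cases "s \<in> Y"; cases "t \<in> Y") auto

text \<open>Gaussian elimination against checks in triangular form: the check \<open>C t\<close> of a pivot
  \<open>t\<close> meets the other pivots only in lower rank, so adding it removes \<open>t\<close> without creating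
  pivots of rank \<open>\<ge> rank t\<close>.\<close>

lemma eliminate_pivots:
  fixes rank :: "'a \<Rightarrow> nat"
  assumes step: "\<And>Z t. Z \<in> \<K> \<Longrightarrow> t \<in> P \<Longrightarrow> sym_diff Z (C t) \<in> \<K> \<and> f (sym_diff Z (C t)) = f Z"
    and own: "\<And>t. t \<in> P \<Longrightarrow> t \<in> C t"
    and lower: "\<And>t s. t \<in> P \<Longrightarrow> s \<in> C t \<inter> P \<Longrightarrow> s \<noteq> t \<Longrightarrow> rank s < rank t"
    and fin: "\<And>Z. Z \<in> \<K> \<Longrightarrow> finite Z"
    and "Z \<in> \<K>"
  shows "\<exists>Z'\<in>\<K>. Z' \<inter> P = {} \<and> f Z' = f Z"
proof -
  have "\<forall>Z\<in>\<K>. (\<forall>t\<in>Z \<inter> P. rank t < r) \<longrightarrow> (\<exists>Z'\<in>\<K>. Z' \<inter> P = {} \<and> f Z' = f Z)" for r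
  proof (induction r)
    case 0
    then show ?case by auto
  next
    case (Suc r)
    have top_rank: "finite A \<Longrightarrow> \<forall>Z\<in>\<K>. (\<forall>t\<in>Z \<inter> P. rank t \<le> r) \<and> {t\<in>Z \<inter> P. rank t = r} = A
            \<longrightarrow> (\<exists>Z'\<in>\<K>. Z' \<inter> P = {} \<and> f Z' = f Z)" for A
    proof (induction A rule: finite_induct)
      case empty
      show ?case
      proof (intro ballI impI)
        fix Z assume "Z \<in> \<K>" and "(\<forall>t\<in>Z \<inter> P. rank t \<le> r) \<and> {t\<in>Z \<inter> P. rank t = r} = {}"
        then show "\<exists>Z'\<in>\<K>. Z' \<inter> P = {} \<and> f Z' = f Z"
          using Suc.IH by (metis (mono_tags, lifting) empty_Collect_eq le_neq_implies_less)
      qed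
    next
      case (insert t A)
      show ?case
      proof (intro ballI impI)
        fix Z assume Z: "Z \<in> \<K>" and
          hZ: "(\<forall>t\<in>Z \<inter> P. rank t \<le> r) \<and> {t\<in>Z \<inter> P. rank t = r} = insert t A"
        then have t: "t \<in> Z" "t \<in> P" "rank t = r" by auto
        define Z1 where "Z1 = sym_diff Z (C t)"
        have Z1: "Z1 \<in> \<K>" "f Z1 = f Z" using step[OF Z t(2)] unfolding Z1_def by auto
        have low: "rank s < r" if "s \<in> C t \<inter> P" "s \<noteq> t" for s
          using lower[OF t(2) that] t(3) by simp
        have "\<forall>s\<in>Z1 \<inter> P. rank s \<le> r"
          using hZ low unfolding Z1_def by (auto simp: less_imp_le)
        moreover have "{s\<in>Z1 \<inter> P. rank s = r} = A"
        proof -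
          have "t \<notin> Z1" using t(1) own[OF t(2)] unfolding Z1_def by blast
          moreover have "s \<in> Z1 \<longleftrightarrow> s \<in> Z" if "s \<in> P" "rank s = r" "s \<noteq> t" for s
            using low[of s] that unfolding Z1_def by auto
          ultimately have "{s\<in>Z1 \<inter> P. rank s = r} = {s\<in>Z \<inter> P. rank s = r} - {t}" by auto
          also have "\<dots> = A" using hZ insert.hyps(2) by auto
          finally show ?thesis .
        qed
        ultimately show "\<exists>Z'\<in>\<K>. Z' \<inter> P = {} \<and> f Z' = f Z"
          using insert.IH Z1 by metis
      qed
    qed
    show ?case
    proof (intro ballI impI)
      fix Z assume "Z \<in> \<K>" "\<forall>t\<in>Z \<inter> P. rank t < Suc r"
      then show "\<exists>Z'\<in>\<K>. Z' \<inter> P = {} \<and> f Z' = f Z"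
        using top_rank[of "{t\<in>Z \<inter> P. rank t = r}"] fin by (simp add: less_Suc_eq_le)
    qed
  qed
  moreover obtain r where "\<forall>t\<in>Z \<inter> P. rank t < r"
    using fin[OF \<open>Z \<in> \<K>\<close>] by (metis finite_Int finite_nat_set_iff_bounded finite_imageI imageI)
  ultimately show ?thesis using \<open>Z \<in> \<K>\<close> by blast
qed

lemma triangular_even_subset_empty:
  fixes rank :: "'a \<Rightarrow> nat"
  assumes check: "\<And>t. t \<in> R \<Longrightarrow> t \<noteq> t\<^sub>0 \<Longrightarrow> \<exists>C\<in>\<C>. t \<in> C \<and> (\<forall>s\<in>C \<inter> R. s \<noteq> t \<longrightarrow> rank s < rank t)"
    and even: "\<And>C. C \<in> \<C> \<Longrightarrow> even (card (Z \<inter> C))"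
    and "Z \<subseteq> R" "t\<^sub>0 \<notin> Z"
  shows "Z = {}"
proof (rule ccontr)
  assume "Z \<noteq> {}"
  then obtain t where t: "t \<in> Z" and least: "\<And>s. s \<in> Z \<Longrightarrow> rank t \<le> rank s"
    using ex_has_least_nat[of "\<lambda>t. t \<in> Z" _ rank] by blast
  obtain C where "C \<in> \<C>" "t \<in> C" and "\<forall>s\<in>C \<inter> R. s \<noteq> t \<longrightarrow> rank s < rank t"
    using check[of t] t assms(3,4) by blast
  then have "Z \<inter> C = {t}"
    using t least assms(3) by (force simp: not_le[symmetric])
  then show False using even[OF \<open>C \<in> \<C>\<close>] by simp
qed

lemma descent_closed_subset_trivial:
  fixes rank :: "'a \<Rightarrow> nat"
  assumes step: "\<And>t. t \<in> Q \<Longrightarrow> t \<noteq> t\<^sub>0 \<Longrightarrow> nb t \<in> Q \<and> adj t (nb t) \<and> rank (nb t) < rank t"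
    and closed: "\<And>s t. adj s t \<Longrightarrow> s \<in> Y \<longleftrightarrow> t \<in> Y"
    and "Y \<subseteq> Q"
  shows "Y = {} \<or> Y = Q"
proof -
  have "\<forall>t. rank t = n \<longrightarrow> t \<in> Q \<longrightarrow> (t \<in> Y \<longleftrightarrow> t\<^sub>0 \<in> Y)" for n
  proof (induction n rule: less_induct)
    case (less n)
    then show ?case
      using step closed by (metis (no_types, lifting))
  qed
  then show ?thesis using \<open>Y \<subseteq> Q\<close> by blast
qed

section \<open>The triangular colour code lattice\<close>

lemma up_mem_cc_qubits_iff:
  "(a, b, True) \<in> cc_qubits d \<longleftrightarrow> 1 \<le> a - b \<and> 1 \<le> a + 2*b \<and> 2*(2*a + b) \<le> 3*int d + 1"
  unfolding cc_qubits_def tri_verts_def in_region_def by auto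

lemma down_mem_cc_qubits_iff:
  "(a, b, False) \<in> cc_qubits d \<longleftrightarrow> 1 \<le> a - b \<and> 0 \<le> a + 2*b \<and> 2*(2*a + b) \<le> 3*int d - 1"
  unfolding cc_qubits_def tri_verts_def in_region_def by auto

lemma mem_cc_plaqs_iff:
  "(a, b) \<in> cc_plaqs d \<longleftrightarrow> 1 \<le> a - b \<and> 2 \<le> a + 2*b \<and> 2*(2*a + b) < 3*int d + 5"
  unfolding cc_plaqs_def in_interior_def by auto

lemma finite_cc_qubits [simp]: "finite (cc_qubits d)"
proof (rule finite_subset)
  let ?B = "{-(3*int d + 3)..3*int d + 3}"
  show "cc_qubits d \<subseteq> ?B \<times> ?B \<times> UNIV"
  proof
    fix t assume t: "t \<in> cc_qubits d"
    obtain a b u where tt: "t = (a, b, u)" by (cases t)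
    show "t \<in> ?B \<times> ?B \<times> UNIV"
      using t unfolding tt by (cases u) (auto simp: up_mem_cc_qubits_iff down_mem_cc_qubits_iff)
  qed
qed simp

lemma odd_nat_as_int:
  assumes "odd d" shows "\<exists>m\<ge>0. int d = 2*m + 1"
proof -
  obtain k where "d = 2*k + 1" using assms oddE by blast
  then show ?thesis by (intro exI[of _ "int k"]) simp
qed

definition hexagon :: "int \<times> int \<Rightarrow> cq set" where
  "hexagon p = (case p of (a, b) \<Rightarrow> {(a, b, True), (a - 1, b, True), (a, b - 1, True),
                                    (a - 1, b, False), (a, b - 1, False), (a - 1, b - 1, False)})"

lemma finite_hexagon [simp]: "finite (hexagon p)"
  by (cases p) (simp add: hexagon_def)

lemma mem_tri_verts_iff_hexagon: "p \<in> tri_verts t \<longleftrightarrow> t \<in> hexagon p"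
  by (cases p; cases t) (auto simp: tri_verts_def hexagon_def)

lemma plaq_eq_hexagon: "plaq d p = hexagon p \<inter> cc_qubits d"
  unfolding plaq_def using mem_tri_verts_iff_hexagon by auto

lemma finite_plaq [simp]: "finite (plaq d p)"
  by (simp add: plaq_eq_hexagon)

lemma sum_plaq_eq_hexagon:
  "(\<Sum>t\<in>plaq d p. f t) = (\<Sum>t\<in>hexagon p. if t \<in> cc_qubits d then f t else 0)"
  by (simp add: plaq_eq_hexagon sum.inter_restrict)

lemma sum_hexagon:
  "(\<Sum>t\<in>hexagon (a, b). f t) = f (a, b, True) + f (a - 1, b, True) + f (a, b - 1, True)
     + f (a - 1, b, False) + f (a, b - 1, False) + f (a - 1, b - 1, False)"
  by (simp add: hexagon_def add.assoc)

text \<open>A plaquette near a boundary loses its corners in opposite pairs, one up- and one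
  down-triangle per cut-off side.\<close>

lemma hexagon_mem_cc_qubits_iff:
  assumes "odd d" "(a, b) \<in> cc_plaqs d"
  defines "E\<^sub>1 \<equiv> 4*a + 2*b \<le> 3*int d + 1" and "E\<^sub>2 \<equiv> 2 \<le> a - b" and "E\<^sub>3 \<equiv> 3 \<le> a + 2*b"
  shows "((a, b, True) \<in> cc_qubits d \<longleftrightarrow> E\<^sub>1) \<and> ((a, b - 1, False) \<in> cc_qubits d \<longleftrightarrow> E\<^sub>1)
       \<and> ((a - 1, b, True) \<in> cc_qubits d \<longleftrightarrow> E\<^sub>2) \<and> ((a - 1, b, False) \<in> cc_qubits d \<longleftrightarrow> E\<^sub>2)
       \<and> ((a, b - 1, True) \<in> cc_qubits d \<longleftrightarrow> E\<^sub>3) \<and> ((a - 1, b - 1, False) \<in> cc_qubits d \<longleftrightarrow> E\<^sub>3)"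
proof -
  obtain m where m: "int d = 2*m + 1" using odd_nat_as_int[OF assms(1)] by blast
  have "1 \<le> a - b" "2 \<le> a + 2*b" "2*(2*a + b) < 3*int d + 5"
    using assms(2) by (auto simp: mem_cc_plaqs_iff)
  then show ?thesis
    unfolding up_mem_cc_qubits_iff down_mem_cc_qubits_iff E\<^sub>1_def E\<^sub>2_def E\<^sub>3_def
    using m by (intro conjI; simp only: E\<^sub>1_def; arith)
qed

definition sublattice_sign :: "cq \<Rightarrow> int" where
  "sublattice_sign t = (if snd (snd t) then 1 else -1)"

definition signed_card :: "cq set \<Rightarrow> int" where
  "signed_card Z = (\<Sum>t\<in>Z. sublattice_sign t)"

lemma signed_card_parity: "finite Z \<Longrightarrow> signed_card Z mod 2 = int (card Z) mod 2"
proof -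
  assume "finite Z"
  have "signed_card Z = (\<Sum>t\<in>Z. 1 - 2 * (if snd (snd t) then 0 else 1))"
    unfolding signed_card_def by (rule sum.cong) (auto simp: sublattice_sign_def)
  also have "\<dots> = int (card Z) - 2 * (\<Sum>t\<in>Z. if snd (snd t) then 0 else 1)"
    by (simp add: sum_subtractf sum_distrib_left)
  finally show ?thesis by presburger
qed

lemma signed_card_plaq:
  assumes "odd d" "(a, b) \<in> cc_plaqs d"
  shows "signed_card (plaq d (a, b)) = 0"
  using hexagon_mem_cc_qubits_iff[OF assms]
  unfolding signed_card_def sum_plaq_eq_hexagon sum_hexagon by (simp add: sublattice_sign_def)

lemma even_card_plaq:
  assumes "odd d" "p \<in> cc_plaqs d"
  shows "even (card (plaq d p))"
proof -
  obtain a b where p: "p = (a, b)" by (cases p)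
  have "int (card (plaq d p)) = (\<Sum>t\<in>hexagon p. if t \<in> cc_qubits d then 1 else 0)"
    using sum_plaq_eq_hexagon[where f = "\<lambda>_. 1::int"] by simp
  also have "\<dots> = 2 * ((if 4*a + 2*b \<le> 3*int d + 1 then 1 else 0) + (if 2 \<le> a - b then 1 else 0)
      + (if 3 \<le> a + 2*b then 1 else 0))"
    using hexagon_mem_cc_qubits_iff[OF assms(1) assms(2)[unfolded p]] unfolding p sum_hexagon
    by simp
  finally show ?thesis by presburger
qed

lemma hexagon_Int_mem_cc_qubits:
  assumes "odd d" "p \<in> cc_plaqs d" "q \<in> cc_plaqs d" "p \<noteq> q" "t \<in> hexagon p" "t \<in> hexagon q"
  shows "t \<in> cc_qubits d"
proof -
  obtain m where m: "int d = 2*m + 1" using odd_nat_as_int[OF assms(1)] by blast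
  obtain a b c e where p: "p = (a, b)" and q: "q = (c, e)" by (cases p; cases q)
  show ?thesis using assms(2-6) m unfolding p q hexagon_def
    by (auto simp: up_mem_cc_qubits_iff down_mem_cc_qubits_iff mem_cc_plaqs_iff; presburger)
qed

lemma even_card_hexagon_Int_hexagon: "even (card (hexagon p \<inter> hexagon q))"
proof -
  obtain a b c e where p: "p = (a, b)" and q: "q = (c, e)" by (cases p; cases q)
  have "int (card (hexagon p \<inter> hexagon q)) = (\<Sum>t\<in>hexagon p. if t \<in> hexagon q then 1 else 0)"
    by (simp add: sum.inter_filter[symmetric] Int_def)
  also have "\<dots> = (if q = p then 6 else if q \<in> {(a+1, b), (a, b+1), (a-1, b+1), (a-1, b), (a, b-1),
      (a+1, b-1)} then 2 else 0)"
    unfolding p q sum_hexagon by (auto simp: hexagon_def)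
  finally show ?thesis by (simp split: if_splits; presburger)
qed

lemma even_card_plaq_Int_plaq:
  assumes "odd d" "p \<in> cc_plaqs d" "q \<in> cc_plaqs d"
  shows "even (card (plaq d p \<inter> plaq d q))"
proof (cases "p = q")
  case True
  then show ?thesis using even_card_plaq[OF assms(1,2)] by simp
next
  case False
  then have "plaq d p \<inter> plaq d q = hexagon p \<inter> hexagon q"
    using hexagon_Int_mem_cc_qubits[OF assms] by (auto simp: plaq_eq_hexagon)
  then show ?thesis using even_card_hexagon_Int_hexagon by simp
qed

text \<open>The qubits along the side \<open>2a + b = (3d + 5)/2\<close> of the triangle; they support a
  representative of the logical operator.\<close>

definition on_boundary :: "nat \<Rightarrow> cq \<Rightarrow> bool" where
  "on_boundary d t = (case t of (a, b, u) \<Rightarrow>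
     if u then 4*a + 2*b = 3*int d + 1 else 4*a + 2*b = 3*int d - 1)"

definition boundary_line :: "nat \<Rightarrow> cq set" where
  "boundary_line d = {t \<in> cc_qubits d. on_boundary d t}"

lemma even_card_boundary_line_Int_plaq:
  assumes "odd d" "p \<in> cc_plaqs d"
  shows "even (card (boundary_line d \<inter> plaq d p))"
proof -
  obtain a b where p: "p = (a, b)" by (cases p)
  obtain m where m: "int d = 2*m + 1" using odd_nat_as_int[OF assms(1)] by blast
  have pab: "1 \<le> a - b" "2 \<le> a + 2*b" "2*(2*a + b) < 3*int d + 5"
    using assms(2) by (auto simp: mem_cc_plaqs_iff p)
  have "int (card (boundary_line d \<inter> plaq d p)) = (\<Sum>t\<in>plaq d p. if on_boundary d t then 1 else 0)"
  proof -
    have "boundary_line d \<inter> plaq d p = {t \<in> plaq d p. on_boundary d t}"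
      by (auto simp: boundary_line_def plaq_def)
    then show ?thesis by (simp add: sum.inter_filter[symmetric])
  qed
  also have "\<dots> = (\<Sum>t\<in>hexagon (a, b). if t \<in> cc_qubits d \<and> on_boundary d t then 1 else 0)"
    unfolding p sum_plaq_eq_hexagon by (rule sum.cong) auto
  also have "\<dots> = 2 * (if 4*a + 2*b = 3*int d + 1 then 1 else 0)
      + 2 * (if 4*a + 2*b = 3*int d + 3 \<and> 3 \<le> a + 2*b then 1 else 0)"
  proof -
    have "4*a + 2*b = 3*int d + 3 \<Longrightarrow> 2 \<le> a - b \<longleftrightarrow> 3 \<le> a + 2*b" using m pab by presburger
    then show ?thesis
      using hexagon_mem_cc_qubits_iff[OF assms(1) assms(2)[unfolded p]] pab
      unfolding sum_hexagon by (simp add: on_boundary_def)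
  qed
  finally show ?thesis by presburger
qed

lemma boundary_line_eq_image:
  assumes m: "int d = 2*m + 1"
  shows "boundary_line d = (\<lambda>j. (m + 1 + j, m - 2*j, True)) ` {0..m}
                         \<union> (\<lambda>j. (m + 1 + j, m - 1 - 2*j, False)) ` {0..m - 1}"
    (is "_ = ?U \<union> ?D")
proof
  show "boundary_line d \<subseteq> ?U \<union> ?D"
  proof
    fix t assume t: "t \<in> boundary_line d"
    obtain a b u where tt: "t = (a, b, u)" by (cases t)
    show "t \<in> ?U \<union> ?D"
    proof (cases u)
      case True
      with t tt m have h: "1 \<le> a - b" "1 \<le> a + 2*b" "4*a + 2*b = 3*int d + 1"
        by (auto simp: boundary_line_def on_boundary_def up_mem_cc_qubits_iff)
      then have "t = (m + 1 + (a - m - 1), m - 2*(a - m - 1), True)" "a - m - 1 \<in> {0..m}"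
        using m tt True by auto
      then show ?thesis by blast
    next
      case False
      with t tt m have h: "1 \<le> a - b" "0 \<le> a + 2*b" "4*a + 2*b = 3*int d - 1"
        by (auto simp: boundary_line_def on_boundary_def down_mem_cc_qubits_iff)
      then have "t = (m + 1 + (a - m - 1), m - 1 - 2*(a - m - 1), False)" "a - m - 1 \<in> {0..m - 1}"
        using m tt False by auto
      then show ?thesis by blast
    qed
  qed
  show "?U \<union> ?D \<subseteq> boundary_line d"
    using m by (auto simp: boundary_line_def on_boundary_def up_mem_cc_qubits_iff down_mem_cc_qubits_iff)
qed

lemma signed_card_boundary_line: "odd d \<Longrightarrow> signed_card (boundary_line d) = 1"
  and odd_card_boundary_line: "odd d \<Longrightarrow> odd (card (boundary_line d))"
proof -
  assume "odd d"
  then obtain m where m: "int d = 2*m + 1" "0 \<le> m" using odd_nat_as_int by blast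
  let ?f = "\<lambda>j. (m + 1 + j, m - 2*j, True)" and ?g = "\<lambda>j. (m + 1 + j, m - 1 - 2*j, False)"
  have inj: "inj_on ?f {0..m}" "inj_on ?g {0..m - 1}" by (auto simp: inj_on_def)
  have disj: "?f ` {0..m} \<inter> ?g ` {0..m - 1} = {}" by auto
  have "signed_card (boundary_line d) = signed_card (?f ` {0..m}) + signed_card (?g ` {0..m - 1})"
    unfolding boundary_line_eq_image[OF m(1)] signed_card_def
    by (rule sum.union_disjoint) (use disj in auto)
  also have "\<dots> = (\<Sum>j\<in>{0..m}. 1) + (\<Sum>j\<in>{0..m - 1}. -1)"
    by (simp add: signed_card_def sum.reindex[OF inj(1)] sum.reindex[OF inj(2)] sublattice_sign_def)
  finally show "signed_card (boundary_line d) = 1" using m(2) by simp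
  have "card (boundary_line d) = card (?f ` {0..m}) + card (?g ` {0..m - 1})"
    unfolding boundary_line_eq_image[OF m(1)] by (rule card_Un_disjoint) (use disj in auto)
  also have "\<dots> = 2 * nat m + 1"
    using m(2) by (simp add: card_image[OF inj(1)] card_image[OF inj(2)] nat_add_distrib)
  finally show "odd (card (boundary_line d))" by simp
qed

text \<open>Pivot qubits: every up-triangle off the boundary line and every down-triangle off it on the
  side \<open>a - b = 1\<close>.  The plaquette centred at the corner \<open>pivot_plaq t\<close> of a pivot \<open>t\<close> meets
  the other pivots only closer to the boundary line.\<close>

definition is_pivot :: "nat \<Rightarrow> cq \<Rightarrow> bool" where
  "is_pivot d t = (case t of (a, b, u) \<Rightarrow>
     if u then 4*a + 2*b \<le> 3*int d - 1 else a - b = 1 \<and> 4*a + 2*b \<le> 3*int d - 3)"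

definition pivot_qubits :: "nat \<Rightarrow> cq set" where
  "pivot_qubits d = {t \<in> cc_qubits d. is_pivot d t}"

definition pivot_plaq :: "cq \<Rightarrow> int \<times> int" where
  "pivot_plaq t = (case t of (a, b, u) \<Rightarrow> if u then (a + 1, b) else (a + 1, b + 1))"

definition pivot_rank :: "nat \<Rightarrow> cq \<Rightarrow> nat" where
  "pivot_rank d t = (case t of (a, b, u) \<Rightarrow>
     nat (if u then 3*int d + 1 - 4*a - 2*b else 3*int d - 1 - 4*a - 2*b))"

lemma pivot_plaq_triangular:
  assumes "odd d" "t \<in> pivot_qubits d"
  shows "pivot_plaq t \<in> cc_plaqs d" "t \<in> plaq d (pivot_plaq t)"
    "\<And>s. s \<in> plaq d (pivot_plaq t) \<inter> pivot_qubits d \<Longrightarrow> s \<noteq> t \<Longrightarrow> pivot_rank d s < pivot_rank d t"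
proof -
  obtain m where m: "int d = 2*m + 1" using odd_nat_as_int[OF assms(1)] by blast
  obtain a b u where t: "t = (a, b, u)" by (cases t)
  have "pivot_plaq t \<in> cc_plaqs d \<and> t \<in> plaq d (pivot_plaq t) \<and>
      (\<forall>s\<in>plaq d (pivot_plaq t) \<inter> pivot_qubits d. s \<noteq> t \<longrightarrow> pivot_rank d s < pivot_rank d t)"
  proof (cases u)
    case True
    have "1 \<le> a - b" "1 \<le> a + 2*b" "4*a + 2*b \<le> 3*int d - 1"
      using assms(2) t True by (auto simp: pivot_qubits_def is_pivot_def up_mem_cc_qubits_iff)
    then show ?thesis using m t True
      by (auto simp: pivot_plaq_def mem_cc_plaqs_iff plaq_eq_hexagon hexagon_def up_mem_cc_qubits_iff
          down_mem_cc_qubits_iff pivot_qubits_def is_pivot_def pivot_rank_def)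
  next
    case False
    have "a - b = 1" "0 \<le> a + 2*b" "4*a + 2*b \<le> 3*int d - 3"
      using assms(2) t False by (auto simp: pivot_qubits_def is_pivot_def down_mem_cc_qubits_iff)
    then show ?thesis using m t False
      by (auto simp: pivot_plaq_def mem_cc_plaqs_iff plaq_eq_hexagon hexagon_def up_mem_cc_qubits_iff
          down_mem_cc_qubits_iff pivot_qubits_def is_pivot_def pivot_rank_def)
  qed
  then show "pivot_plaq t \<in> cc_plaqs d" "t \<in> plaq d (pivot_plaq t)"
    "\<And>s. s \<in> plaq d (pivot_plaq t) \<inter> pivot_qubits d \<Longrightarrow> s \<noteq> t \<Longrightarrow> pivot_rank d s < pivot_rank d t"
    by auto
qed

definition corner_qubit :: "nat \<Rightarrow> cq" where
  "corner_qubit d = ((int d + 1) div 2, (int d - 1) div 2, True)"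

text \<open>On the non-pivot qubits the plaquette just above a qubit is triangular with respect to
  this rank, which orders the boundary line last, from its corner qubit downwards.\<close>

definition non_pivot_rank :: "nat \<Rightarrow> cq \<Rightarrow> nat" where
  "non_pivot_rank d t = (case t of (a, b, u) \<Rightarrow>
     nat (if on_boundary d (a, b, u) then 6*int d + 6 - b else 2*a + b))"

lemma corner_qubit_eq: "int d = 2*m + 1 \<Longrightarrow> corner_qubit d = (m + 1, m, True)"
  unfolding corner_qubit_def by simp

lemma corner_qubit_mem_boundary_line:
  assumes "odd d" shows "corner_qubit d \<in> boundary_line d"
proof -
  obtain m where m: "int d = 2*m + 1" "0 \<le> m" using odd_nat_as_int[OF assms] by blast
  show ?thesis unfolding corner_qubit_eq[OF m(1)] boundary_line_def on_boundary_def
    using m by (simp add: up_mem_cc_qubits_iff)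
qed

lemma boundary_line_Int_pivot_qubits: "boundary_line d \<inter> pivot_qubits d = {}"
  unfolding boundary_line_def pivot_qubits_def on_boundary_def is_pivot_def by auto

lemma non_pivot_triangular:
  assumes "odd d" "t \<in> cc_qubits d - pivot_qubits d" "t \<noteq> corner_qubit d"
  shows "\<exists>C\<in>plaq d ` cc_plaqs d. t \<in> C \<and>
    (\<forall>s\<in>C \<inter> (cc_qubits d - pivot_qubits d). s \<noteq> t \<longrightarrow> non_pivot_rank d s < non_pivot_rank d t)"
proof -
  obtain m where m: "int d = 2*m + 1" using odd_nat_as_int[OF assms(1)] by blast
  obtain a b u where t: "t = (a, b, u)" by (cases t)
  have "(a, b + 1) \<in> cc_plaqs d \<and> t \<in> plaq d (a, b + 1) \<and> (\<forall>s\<in>plaq d (a, b + 1) \<inter>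
      (cc_qubits d - pivot_qubits d). s \<noteq> t \<longrightarrow> non_pivot_rank d s < non_pivot_rank d t)"
  proof (cases u)
    case True
    have h: "1 \<le> a - b" "1 \<le> a + 2*b" "4*a + 2*b \<le> 3*int d + 1" "\<not> 4*a + 2*b \<le> 3*int d - 1"
      using assms(2) t True by (auto simp: pivot_qubits_def is_pivot_def up_mem_cc_qubits_iff)
    then have "4*a + 2*b = 3*int d + 1" using m by presburger
    moreover from this have "2 \<le> a - b" using h m assms(3) t True corner_qubit_eq[OF m] by auto
    ultimately show ?thesis using h m t True
      by (auto simp: mem_cc_plaqs_iff plaq_eq_hexagon hexagon_def up_mem_cc_qubits_iff
          down_mem_cc_qubits_iff pivot_qubits_def is_pivot_def non_pivot_rank_def on_boundary_def)
  next
    case False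
    have h: "1 \<le> a - b" "0 \<le> a + 2*b" "4*a + 2*b \<le> 3*int d - 1"
      "\<not> (a - b = 1 \<and> 4*a + 2*b \<le> 3*int d - 3)"
      using assms(2) t False by (auto simp: pivot_qubits_def is_pivot_def down_mem_cc_qubits_iff)
    have "2 \<le> a - b" using h m by presburger
    moreover have "4*a + 2*b \<noteq> 6*m + 1 \<and> 4*a + 2*b \<noteq> 6*m - 1 \<and> 4*a + 2*b \<noteq> 6*m + 3" by presburger
    ultimately show ?thesis using h m t False
      by (auto simp: mem_cc_plaqs_iff plaq_eq_hexagon hexagon_def up_mem_cc_qubits_iff
          down_mem_cc_qubits_iff pivot_qubits_def is_pivot_def non_pivot_rank_def on_boundary_def)
  qed
  then show ?thesis by blast
qed

text \<open>Stepping along a lattice edge towards the qubit \<open>(1, 0, True)\<close> at a corner of the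
  triangle: the qubits and edges form a connected graph.\<close>

definition toward_origin :: "cq \<Rightarrow> cq" where
  "toward_origin t = (case t of (a, b, u) \<Rightarrow>
     if u then (if 2 \<le> a - b then (a - 1, b, False) else (a, b - 1, False))
     else (if 1 \<le> a + 2*b then (a, b, True) else (a, b + 1, True)))"

definition origin_distance :: "cq \<Rightarrow> nat" where
  "origin_distance t = (case t of (a, b, u) \<Rightarrow> nat (2*\<bar>b\<bar> + 2*a + (if u then 0 else 1)))"

lemma doubleton_mem_cc_edges:
  assumes "s \<in> cc_qubits d" "t \<in> cc_qubits d" "s \<noteq> t" "tri_verts s \<inter> tri_verts t = {p, q}" "p \<noteq> q"
  shows "{s, t} \<in> cc_edges d"
proof -
  have "card (tri_verts s \<inter> tri_verts t) = 2" using assms(4,5) by simp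
  then show ?thesis using assms(1-3) unfolding cc_edges_def by blast
qed

lemma toward_origin_step:
  assumes "t \<in> cc_qubits d" "t \<noteq> (1, 0, True)"
  shows "toward_origin t \<in> cc_qubits d \<and> {t, toward_origin t} \<in> cc_edges d
    \<and> origin_distance (toward_origin t) < origin_distance t"
proof -
  obtain a b u where tt: "t = (a, b, u)" by (cases t)
  show ?thesis
  proof (cases u)
    case True
    have h: "1 \<le> a - b" "1 \<le> a + 2*b" "4*a + 2*b \<le> 3*int d + 1"
      using assms(1) tt True by (auto simp: up_mem_cc_qubits_iff)
    show ?thesis
    proof (cases "2 \<le> a - b")
      case c: True
      have "tri_verts (a, b, True) \<inter> tri_verts (a - 1, b, False) = {(a, b), (a, b + 1)}"
        by (auto simp: tri_verts_def)
      then show ?thesis unfolding tt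
        using True c h doubleton_mem_cc_edges[of "(a, b, True)" d "(a - 1, b, False)" "(a, b)" "(a, b + 1)"]
        by (auto simp: toward_origin_def origin_distance_def up_mem_cc_qubits_iff down_mem_cc_qubits_iff)
    next
      case c: False
      have b: "1 \<le> b" using c h assms(2) tt True by auto
      have "tri_verts (a, b, True) \<inter> tri_verts (a, b - 1, False) = {(a, b), (a + 1, b)}"
        by (auto simp: tri_verts_def)
      then show ?thesis unfolding tt
        using True c h b doubleton_mem_cc_edges[of "(a, b, True)" d "(a, b - 1, False)" "(a, b)" "(a + 1, b)"]
        by (auto simp: toward_origin_def origin_distance_def up_mem_cc_qubits_iff down_mem_cc_qubits_iff)
    qed
  next
    case False
    have h: "1 \<le> a - b" "0 \<le> a + 2*b" "4*a + 2*b \<le> 3*int d - 1"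
      using assms(1) tt False by (auto simp: down_mem_cc_qubits_iff)
    show ?thesis
    proof (cases "1 \<le> a + 2*b")
      case c: True
      have "tri_verts (a, b, False) \<inter> tri_verts (a, b, True) = {(a + 1, b), (a, b + 1)}"
        by (auto simp: tri_verts_def)
      then show ?thesis unfolding tt
        using False c h doubleton_mem_cc_edges[of "(a, b, False)" d "(a, b, True)" "(a + 1, b)" "(a, b + 1)"]
        by (auto simp: toward_origin_def origin_distance_def up_mem_cc_qubits_iff down_mem_cc_qubits_iff)
    next
      case c: False
      have b: "b \<le> -1" using c h by auto
      have "tri_verts (a, b, False) \<inter> tri_verts (a, b + 1, True) = {(a, b + 1), (a + 1, b + 1)}"
        by (auto simp: tri_verts_def)
      then show ?thesis unfolding tt
        using False c h b
          doubleton_mem_cc_edges[of "(a, b, False)" d "(a, b + 1, True)" "(a, b + 1)" "(a + 1, b + 1)"]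
        by (auto simp: toward_origin_def origin_distance_def up_mem_cc_qubits_iff down_mem_cc_qubits_iff)
    qed
  qed
qed


section \<open>Sets meeting every plaquette evenly\<close>

definition plaq_even :: "nat \<Rightarrow> cq set \<Rightarrow> bool" where
  "plaq_even d Z \<longleftrightarrow> Z \<subseteq> cc_qubits d \<and> (\<forall>p\<in>cc_plaqs d. even (card (Z \<inter> plaq d p)))"

lemma plaq_even_finite: "plaq_even d Z \<Longrightarrow> finite Z"
  unfolding plaq_even_def using finite_subset finite_cc_qubits by blast

lemma plaq_even_sym_diff:
  assumes "plaq_even d A" "plaq_even d B"
  shows "plaq_even d (sym_diff A B)"
  using even_card_sym_diff_Int_iff[OF plaq_even_finite[OF assms(1)] plaq_even_finite[OF assms(2)]] assms
  unfolding plaq_even_def by auto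

lemma plaq_even_plaq: "odd d \<Longrightarrow> p \<in> cc_plaqs d \<Longrightarrow> plaq_even d (plaq d p)"
  using even_card_plaq_Int_plaq unfolding plaq_even_def by (auto simp: plaq_def)

lemma plaq_even_boundary_line: "odd d \<Longrightarrow> plaq_even d (boundary_line d)"
  using even_card_boundary_line_Int_plaq unfolding plaq_even_def boundary_line_def by auto

lemma plaq_even_cc_qubits: "odd d \<Longrightarrow> plaq_even d (cc_qubits d)"
  using even_card_plaq unfolding plaq_even_def by (simp add: Int_absorb1 plaq_def)

text \<open>The Z-plaquettes generate all of \<open>plaq_even\<close> except the logical class of the boundary line;
  both components below are constant on cosets of the plaquettes.\<close>

definition coset_invariant :: "nat \<Rightarrow> cq set \<Rightarrow> int \<times> int" where
  "coset_invariant d Z = (signed_card Z mod 4, int (card (Z \<inter> boundary_line d)) mod 2)"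

lemma coset_invariant_sym_diff_plaq:
  assumes "odd d" "plaq_even d Z" "p \<in> cc_plaqs d"
  shows "coset_invariant d (sym_diff Z (plaq d p)) = coset_invariant d Z"
proof -
  let ?P = "plaq d p" and ?L = "boundary_line d"
  have fin: "finite Z" using plaq_even_finite[OF assms(2)] .
  have "signed_card ?P = 0" using signed_card_plaq[OF assms(1)] assms(3) by (cases p) simp
  moreover have "even (card (Z \<inter> ?P))" using assms(2,3) unfolding plaq_even_def by blast
  moreover have "signed_card (sym_diff Z ?P) = signed_card Z + signed_card ?P - 2 * signed_card (Z \<inter> ?P)"
    unfolding signed_card_def using fin by (simp add: sum_sym_diff)
  moreover have "signed_card (Z \<inter> ?P) mod 2 = int (card (Z \<inter> ?P)) mod 2"
    using fin by (simp add: signed_card_parity)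
  ultimately have "signed_card (sym_diff Z ?P) mod 4 = signed_card Z mod 4" by presburger
  moreover have "int (card (sym_diff Z ?P \<inter> ?L)) mod 2 = int (card (Z \<inter> ?L)) mod 2"
  proof -
    have "sym_diff Z ?P \<inter> ?L = sym_diff (Z \<inter> ?L) (?P \<inter> ?L)" by auto
    then have "int (card (sym_diff Z ?P \<inter> ?L))
        = int (card (Z \<inter> ?L)) + int (card (?P \<inter> ?L)) - 2 * int (card (Z \<inter> ?L \<inter> (?P \<inter> ?L)))"
      using card_sym_diff[of "Z \<inter> ?L" "?P \<inter> ?L"] fin by simp
    moreover have "even (card (?P \<inter> ?L))"
      using even_card_boundary_line_Int_plaq[OF assms(1,3)] by (simp add: Int_commute)
    ultimately show ?thesis by presburger
  qed
  ultimately show ?thesis unfolding coset_invariant_def by simp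
qed

lemma plaq_even_no_pivots_trivial:
  assumes "odd d" "plaq_even d Z" "Z \<inter> pivot_qubits d = {}" "corner_qubit d \<notin> Z"
  shows "Z = {}"
proof (rule triangular_even_subset_empty)
  show "\<exists>C\<in>plaq d ` cc_plaqs d. t \<in> C \<and> (\<forall>s\<in>C \<inter> (cc_qubits d - pivot_qubits d).
      s \<noteq> t \<longrightarrow> non_pivot_rank d s < non_pivot_rank d t)"
    if "t \<in> cc_qubits d - pivot_qubits d" "t \<noteq> corner_qubit d" for t
    using non_pivot_triangular[OF assms(1) that] .
  show "even (card (Z \<inter> C))" if "C \<in> plaq d ` cc_plaqs d" for C
    using assms(2) that unfolding plaq_even_def by blast
  show "Z \<subseteq> cc_qubits d - pivot_qubits d" using assms(2,3) unfolding plaq_even_def by blast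
qed (use assms(4) in blast)

lemma plaq_even_classification:
  assumes "odd d" "plaq_even d Z"
  shows "signed_card Z mod 4 = int (card (Z \<inter> boundary_line d)) mod 2"
proof -
  let ?K = "Collect (plaq_even d)" and ?L = "boundary_line d"
  have step: "sym_diff W (plaq d (pivot_plaq t)) \<in> ?K \<and>
      coset_invariant d (sym_diff W (plaq d (pivot_plaq t))) = coset_invariant d W"
    if "W \<in> ?K" "t \<in> pivot_qubits d" for W t
  proof -
    have W: "plaq_even d W" and p: "pivot_plaq t \<in> cc_plaqs d"
      using that pivot_plaq_triangular(1)[OF assms(1)] by auto
    show ?thesis using plaq_even_sym_diff[OF W plaq_even_plaq[OF assms(1) p]]
      coset_invariant_sym_diff_plaq[OF assms(1) W p] by simp
  qed
  obtain Z' where Z': "plaq_even d Z'" "Z' \<inter> pivot_qubits d = {}"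
    "coset_invariant d Z' = coset_invariant d Z"
    using eliminate_pivots[where \<K> = ?K and P = "pivot_qubits d" and C = "\<lambda>t. plaq d (pivot_plaq t)"
        and f = "coset_invariant d" and rank = "pivot_rank d" and Z = Z, OF step]
      pivot_plaq_triangular(2,3)[OF assms(1)] plaq_even_finite assms(2) by auto
  have "Z' = {} \<or> Z' = ?L"
  proof (cases "corner_qubit d \<in> Z'")
    case True
    have "plaq_even d (sym_diff Z' ?L)"
      by (rule plaq_even_sym_diff[OF Z'(1) plaq_even_boundary_line[OF assms(1)]])
    moreover have "sym_diff Z' ?L \<inter> pivot_qubits d = {}"
      using Z'(2) boundary_line_Int_pivot_qubits by blast
    moreover have "corner_qubit d \<notin> sym_diff Z' ?L"
      using True corner_qubit_mem_boundary_line[OF assms(1)] by blast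
    ultimately have "sym_diff Z' ?L = {}" by (rule plaq_even_no_pivots_trivial[OF assms(1)])
    then show ?thesis by blast
  next
    case False
    then show ?thesis using plaq_even_no_pivots_trivial[OF assms(1) Z'(1,2)] by blast
  qed
  moreover have "coset_invariant d ?L = (1, 1)"
    using signed_card_boundary_line[OF assms(1)] odd_card_boundary_line[OF assms(1)]
    by (simp add: coset_invariant_def odd_iff_mod_2_eq_one[symmetric])
  moreover have "coset_invariant d {} = (0, 0)"
    by (simp add: coset_invariant_def signed_card_def)
  ultimately show ?thesis using Z'(3) unfolding coset_invariant_def by auto
qed

lemma signed_card_mod4_plaq_even:
  assumes "odd d" "plaq_even d Z"
  shows "signed_card Z mod 4 = int (card Z) mod 2"
proof -
  have "signed_card Z mod 4 = int (card (Z \<inter> boundary_line d)) mod 2"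
    by (rule plaq_even_classification[OF assms])
  moreover have "signed_card Z mod 2 = int (card Z) mod 2"
    by (rule signed_card_parity[OF plaq_even_finite[OF assms(2)]])
  moreover have "\<And>s c n :: int. s mod 4 = c mod 2 \<Longrightarrow> s mod 2 = n mod 2 \<Longrightarrow> s mod 4 = n mod 2"
    by presburger
  ultimately show ?thesis by blast
qed

lemma signed_card_cc_qubits_mod4: "odd d \<Longrightarrow> signed_card (cc_qubits d) mod 4 = 1"
  and odd_card_cc_qubits: "odd d \<Longrightarrow> odd (card (cc_qubits d))"
proof -
  assume d: "odd d"
  have "cc_qubits d \<inter> boundary_line d = boundary_line d" by (auto simp: boundary_line_def)
  then have "signed_card (cc_qubits d) mod 4 = int (card (boundary_line d)) mod 2"
    using plaq_even_classification[OF d plaq_even_cc_qubits[OF d]] by simp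
  also have "\<dots> = 1" using odd_card_boundary_line[OF d] by (simp add: odd_iff_mod_2_eq_one[symmetric])
  finally show *: "signed_card (cc_qubits d) mod 4 = 1" .
  have "signed_card (cc_qubits d) mod 2 = int (card (cc_qubits d)) mod 2"
    by (rule signed_card_parity[OF finite_cc_qubits])
  with * show "odd (card (cc_qubits d))" by presburger
qed

lemma finite_of_mem_cc_edges: "E \<in> cc_edges d \<Longrightarrow> finite E"
  unfolding cc_edges_def by auto

lemma distinct_of_mem_cc_edges: "{s, t} \<in> cc_edges d \<Longrightarrow> s \<noteq> t"
  unfolding cc_edges_def by (auto simp: doubleton_eq_iff)

lemma plaq_even_even_on_edges_trivial:
  assumes "valid_edge_choice d e" "plaq_even d Y" "\<And>p. p \<in> cc_plaqs d \<Longrightarrow> even (card (Y \<inter> e p))"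
  shows "Y = {} \<or> Y = cc_qubits d"
proof (rule descent_closed_subset_trivial[where t\<^sub>0 = "(1, 0, True)" and nb = toward_origin
      and rank = origin_distance and adj = "\<lambda>s t. {s, t} \<in> cc_edges d"])
  show "toward_origin t \<in> cc_qubits d \<and> {t, toward_origin t} \<in> cc_edges d
      \<and> origin_distance (toward_origin t) < origin_distance t"
    if "t \<in> cc_qubits d" "t \<noteq> (1, 0, True)" for t
    using toward_origin_step[OF that] .
  show "Y \<subseteq> cc_qubits d" using assms(2) unfolding plaq_even_def by blast
  fix s t assume st: "{s, t} \<in> cc_edges d"
  have gen: "finite A \<and> even (card (Y \<inter> A))" if "A \<in> e ` cc_plaqs d \<union> plaq d ` cc_plaqs d" for A
  proof -
    from that obtain p where p: "p \<in> cc_plaqs d" "A = e p \<or> A = plaq d p" by blast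
    have "finite (e p)"
      using assms(1) p(1) finite_of_mem_cc_edges unfolding valid_edge_choice_def by blast
    then show ?thesis using p assms(3)[OF p(1)] assms(2) unfolding plaq_even_def by auto
  qed
  have "{s, t} \<in> f2span (e ` cc_plaqs d \<union> plaq d ` cc_plaqs d)"
    using assms(1) st unfolding valid_edge_choice_def by blast
  then have "even (card (Y \<inter> {s, t}))" using even_card_Int_f2span[OF gen] by blast
  then show "s \<in> Y \<longleftrightarrow> t \<in> Y"
    using even_card_Int_doubleton_iff[OF distinct_of_mem_cc_edges[OF st]] by blast
qed

section \<open>The stacked code\<close>

text \<open>The factor \<open>\<Delta> = signed_card (cc_qubits d) \<equiv> 1 (mod 4)\<close> normalises the phase of a pair of
  layers: for \<open>B = cc_qubits d - A\<close> it is \<open>\<Delta> (2 signed_card A - \<Delta>) \<equiv> 2 (card A mod 2) - 1 (mod 8)\<close>.\<close>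

definition pi8_angle :: "nat \<Rightarrow> sq \<Rightarrow> real" where
  "pi8_angle d q = (case q of (l, t) \<Rightarrow> if l = d then 1/4
     else (if odd l then 1 else -1) * of_int (signed_card (cc_qubits d) * sublattice_sign t) / 4)"

lemma sum_pi8_angle_layer:
  "l \<noteq> d \<Longrightarrow> (\<Sum>t\<in>A. pi8_angle d (l, t))
     = (if odd l then 1 else -1) * of_int (signed_card (cc_qubits d) * signed_card A) / 4"
  by (simp add: pi8_angle_def signed_card_def sum_distrib_left sum_divide_distrib)

lemma card_filter_lift: "card {q \<in> lift l A. x q} = card (A \<inter> {t. x (l, t)})"
proof -
  have "{q \<in> lift l A. x q} = Pair l ` (A \<inter> {t. x (l, t)})" unfolding lift_def by auto
  then show ?thesis by (simp add: card_image inj_on_def)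
qed

lemma card_filter_lift_Un:
  assumes "l\<^sub>1 \<noteq> l\<^sub>2" "finite A" "finite B"
  shows "card {q \<in> lift l\<^sub>1 A \<union> lift l\<^sub>2 B. x q} = card (A \<inter> {t. x (l\<^sub>1, t)}) + card (B \<inter> {t. x (l\<^sub>2, t)})"
proof -
  have "{q \<in> lift l\<^sub>1 A \<union> lift l\<^sub>2 B. x q} = {q \<in> lift l\<^sub>1 A. x q} \<union> {q \<in> lift l\<^sub>2 B. x q}" by auto
  moreover have "{q \<in> lift l\<^sub>1 A. x q} \<inter> {q \<in> lift l\<^sub>2 B. x q} = {}" using assms(1) by (auto simp: lift_def)
  moreover have "finite {q \<in> lift l\<^sub>1 A. x q}" "finite {q \<in> lift l\<^sub>2 B. x q}"
    using assms(2,3) by (auto simp: lift_def)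
  ultimately show ?thesis by (simp add: card_Un_disjoint card_filter_lift)
qed

lemma stack_ZG_memI:
  assumes "d = 2*m + 1" "k < m" "p \<in> cc_plaqs d"
  shows "lift (2*k + 1) (e p) \<union> lift (2*k + 2) (e p) \<in> stack_ZG d e"
    and "lift (2*k + 1) (plaq d p) \<in> stack_ZG d e"
    and "lift (2*k + 1) (plaq d p) \<union> lift (2*k + 2) (plaq d p) \<in> stack_ZG d e"
proof -
  have k: "1 \<le> Suc k" "Suc k \<le> (d - 1) div 2" and idx: "2 * Suc k - 1 = 2*k + 1" "2 * Suc k = 2*k + 2"
    using assms(1,2) by auto
  show "lift (2*k + 1) (e p) \<union> lift (2*k + 2) (e p) \<in> stack_ZG d e"
    "lift (2*k + 1) (plaq d p) \<in> stack_ZG d e"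
    "lift (2*k + 1) (plaq d p) \<union> lift (2*k + 2) (plaq d p) \<in> stack_ZG d e"
    unfolding stack_ZG_def idx[symmetric] using k assms(3) by blast+
qed

lemma stack_ZG_logical_memI:
  assumes "d = 2*m + 1" "k < m"
  shows "lift (2*k + 2) (layer_qubits d (2*k + 2)) \<union> lift (2*k + 3) (layer_qubits d (2*k + 3))
           \<in> stack_ZG d e"
proof -
  have k: "1 \<le> Suc k" "Suc k \<le> (d - 1) div 2" and idx: "2 * Suc k = 2*k + 2" "2 * Suc k + 1 = 2*k + 3"
    using assms by auto
  show ?thesis unfolding stack_ZG_def idx[symmetric] using k by blast
qed

lemma finite_layer_qubits: "finite (layer_qubits d l)"
  by (simp add: layer_qubits_def)

lemma plaq_even_layer_pair:
  fixes x :: "sq \<Rightarrow> bool"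
  assumes "odd d" "valid_edge_choice d e" "d = 2*m + 1" "k < m"
    and sup: "{q. x q} \<subseteq> stack_qubits d"
    and ev: "\<And>B. B \<in> stack_ZG d e \<Longrightarrow> even (card {q \<in> B. x q})"
  defines "L l \<equiv> {t. x (l, t)}"
  shows "plaq_even d (L (2*k + 1))"
    and "L (2*k + 2) = L (2*k + 1) \<or> L (2*k + 2) = cc_qubits d - L (2*k + 1)"
    and "even (card (L (2*k + 2)) + card (L (2*k + 3)))"
proof -
  let ?o = "2*k + 1" and ?e = "2*k + 2"
  have Lsub: "L l \<subseteq> layer_qubits d l" for l using sup unfolding L_def stack_qubits_def by auto
  have finL: "finite (L l)" for l by (rule finite_subset[OF Lsub finite_layer_qubits])
  have layer: "layer_qubits d ?o = cc_qubits d" "layer_qubits d ?e = cc_qubits d"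
    using assms(3,4) by (auto simp: layer_qubits_def)
  have ev_lift: "even (card (A \<inter> L ?o) + card (A \<inter> L ?e))"
    if "lift ?o A \<union> lift ?e A \<in> stack_ZG d e" "finite A" for A
    using ev[OF that(1)] card_filter_lift_Un[of ?o ?e A A x] that(2) unfolding L_def by simp
  have odd_layer: "plaq_even d (L ?o)"
    using Lsub[of ?o] ev[OF stack_ZG_memI(2)[OF assms(3,4)]] card_filter_lift[of ?o _ x]
    unfolding plaq_even_def layer L_def by (simp add: Int_commute)
  then show "plaq_even d (L ?o)" .
  have even_layer: "plaq_even d (L ?e)"
    using Lsub[of ?e] odd_layer ev_lift[OF stack_ZG_memI(3)[OF assms(3,4)] finite_plaq]
    unfolding plaq_even_def layer by (auto simp: Int_commute)
  have "sym_diff (L ?o) (L ?e) = {} \<or> sym_diff (L ?o) (L ?e) = cc_qubits d"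
  proof (rule plaq_even_even_on_edges_trivial[OF assms(2) plaq_even_sym_diff[OF odd_layer even_layer]])
    fix p assume p: "p \<in> cc_plaqs d"
    have "finite (e p)" using assms(2) p finite_of_mem_cc_edges unfolding valid_edge_choice_def by blast
    then have "even (card (e p \<inter> L ?o) + card (e p \<inter> L ?e))"
      by (rule ev_lift[OF stack_ZG_memI(1)[OF assms(3,4) p]])
    then show "even (card (sym_diff (L ?o) (L ?e) \<inter> e p))"
      using even_card_sym_diff_Int_iff[OF finL finL] by (simp add: Int_commute)
  qed
  then show "L ?e = L ?o \<or> L ?e = cc_qubits d - L ?o"
    using odd_layer even_layer unfolding plaq_even_def by blast
  have "even (card (layer_qubits d ?e \<inter> L ?e) + card (layer_qubits d (2*k + 3) \<inter> L (2*k + 3)))"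
    using ev[OF stack_ZG_logical_memI[OF assms(3,4)]] finite_layer_qubits
      card_filter_lift_Un[of ?e "2*k + 3" "layer_qubits d ?e" "layer_qubits d (2*k + 3)" x]
    unfolding L_def by simp
  moreover have "layer_qubits d l \<inter> L l = L l" for l using Lsub by blast
  ultimately show "even (card (L ?e) + card (L (2*k + 3)))" by simp
qed

lemma mult_double_diff_mod_8:
  fixes q \<delta> :: int
  assumes "q mod 4 = a" "\<delta> mod 4 = 1"
  shows "\<delta> * (2*q - \<delta>) mod 8 = (2*a - 1) mod 8"
proof -
  obtain i j where "q = a + 4*i" "\<delta> = 1 + 4*j"
    using assms by (metis mod_div_mult_eq add.commute mult.commute)
  then have "\<delta> * (2*q - \<delta>) = (2*a - 1) + 8 * (i - j + j*a - 2*j*j + 4*i*j)"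
    by (simp add: algebra_simps)
  then show ?thesis by (metis mod_mult_self2 mult.commute)
qed

lemma signed_card_layer_pair_mod_8:
  assumes "odd d" "plaq_even d A" "B = A \<or> B = cc_qubits d - A" "even (card B + n)"
  shows "signed_card (cc_qubits d) * (signed_card A - signed_card B) mod 8
           = (int (card A) mod 2 - int n mod 2) mod 8"
  using assms(3)
proof
  assume "B = A"
  then show ?thesis using assms(4) by simp presburger
next
  assume B: "B = cc_qubits d - A"
  let ?\<Delta> = "signed_card (cc_qubits d)" and ?a = "int (card A) mod 2"
  have A: "A \<subseteq> cc_qubits d" using assms(2) unfolding plaq_even_def by blast
  have "signed_card B = ?\<Delta> - signed_card A"
    unfolding B signed_card_def using sum_diff[OF finite_cc_qubits A] by simp
  then have eq: "?\<Delta> * (signed_card A - signed_card B) = ?\<Delta> * (2 * signed_card A - ?\<Delta>)" by simp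
  have "?\<Delta> * (signed_card A - signed_card B) mod 8 = (2 * ?a - 1) mod 8"
    unfolding eq by (rule mult_double_diff_mod_8[OF signed_card_mod4_plaq_even[OF assms(1,2)]
        signed_card_cc_qubits_mod4[OF assms(1)]])
  also have "\<dots> = (?a - int n mod 2) mod 8"
  proof -
    have "int (card B) = int (card (cc_qubits d)) - int (card A)"
      unfolding B using card_Diff_subset[OF finite_subset[OF A finite_cc_qubits] A] card_mono[OF _ A]
      by simp
    then have "int n mod 2 = 1 - ?a"
      using assms(4) odd_card_cc_qubits[OF assms(1)] by presburger
    then show ?thesis by simp
  qed
  finally show ?thesis .
qed

lemma sum_odd_interval_pairs:
  fixes g :: "nat \<Rightarrow> 'a::comm_monoid_add"
  shows "(\<Sum>l\<in>{1..2*m + 1}. g l) = g (2*m + 1) + (\<Sum>k<m. g (2*k + 1) + g (2*k + 2))"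
    and "(\<Sum>l\<in>{1..2*m + 1}. g l) = g 1 + (\<Sum>k<m. g (2*k + 2) + g (2*k + 3))"
proof -
  have step: "(\<Sum>l\<in>{1..2*Suc n + 1}. g l) = (\<Sum>l\<in>{1..2*n + 1}. g l) + g (2*n + 2) + g (2*n + 3)"
    for n
  proof -
    have "{1..2*Suc n + 1} = insert (2*n + 3) (insert (2*n + 2) {1..2*n + 1})" by auto
    then show ?thesis by (simp add: algebra_simps)
  qed
  show "(\<Sum>l\<in>{1..2*m + 1}. g l) = g (2*m + 1) + (\<Sum>k<m. g (2*k + 1) + g (2*k + 2))"
  proof (induction m)
    case (Suc m)
    show ?case unfolding step Suc.IH by (simp add: algebra_simps numeral_3_eq_3)
  qed simp
  show "(\<Sum>l\<in>{1..2*m + 1}. g l) = g 1 + (\<Sum>k<m. g (2*k + 2) + g (2*k + 3))"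
  proof (induction m)
    case (Suc m)
    show ?case unfolding step Suc.IH by (simp add: algebra_simps numeral_3_eq_3)
  qed simp
qed

lemma stack_support_eq_Sigma:
  "{q. x q} \<subseteq> stack_qubits d \<Longrightarrow> {q \<in> stack_qubits d. x q} = Sigma {1..d} (\<lambda>l. {t. x (l, t)})"
  unfolding stack_qubits_def by auto

lemma pi8_angle_sum_mod_8:
  fixes x :: "sq \<Rightarrow> bool"
  assumes "odd d" "valid_edge_choice d e"
    and sup: "{q. x q} \<subseteq> stack_qubits d"
    and ev: "\<And>B. B \<in> stack_ZG d e \<Longrightarrow> even (card {q \<in> B. x q})"
  defines "X \<equiv> {q \<in> stack_qubits d. x q}"
  shows "\<exists>N::int. (\<Sum>q\<in>X. pi8_angle d q) = of_int N / 4 \<and> N mod 8 = int (card X) mod 2"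
proof -
  obtain m where dm: "d = 2*m + 1" using assms(1) oddE by blast
  define L where "L l = {t. x (l, t)}" for l
  define \<Delta> where "\<Delta> = signed_card (cc_qubits d)"
  have X: "X = Sigma {1..d} L" unfolding X_def L_def by (rule stack_support_eq_Sigma[OF sup])
  have Lsub: "L l \<subseteq> layer_qubits d l" for l using sup unfolding L_def stack_qubits_def by auto
  have finL: "finite (L l)" for l by (rule finite_subset[OF Lsub finite_layer_qubits])
  have "L d \<subseteq> {(0, 0, True)}" using Lsub[of d] by (simp add: layer_qubits_def)
  then have Ld: "card (L d) \<le> 1" using card_mono[of "{(0, 0, True)}" "L d"] by simp
  note pair = plaq_even_layer_pair[OF assms(1,2) dm _ sup ev, folded L_def]
  define a where "a k = int (card (L (2*k + 1))) mod 2" for k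
  define T where "T k = \<Delta> * (signed_card (L (2*k + 1)) - signed_card (L (2*k + 2)))" for k
  have T: "T k mod 8 = (a k - a (Suc k)) mod 8" if "k < m" for k
    using signed_card_layer_pair_mod_8[OF assms(1) pair[OF that]]
    unfolding T_def a_def \<Delta>_def by (simp add: numeral_3_eq_3)
  have "(\<Sum>k<m. T k) mod 8 = (\<Sum>k<m. T k mod 8) mod 8" by (simp add: mod_sum_eq)
  also have "\<dots> = (\<Sum>k<m. (a k - a (Suc k)) mod 8) mod 8" using T by simp
  also have "\<dots> = (a 0 - a m) mod 8" by (simp add: mod_sum_eq sum_lessThan_telescope')
  also have "\<dots> = (a 0 - int (card (L d))) mod 8" using Ld unfolding a_def dm by (cases "card (L d)") auto
  finally have sum_T: "(\<Sum>k<m. T k) mod 8 = (a 0 - int (card (L d))) mod 8" .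
  define g where "g l = (\<Sum>t\<in>L l. pi8_angle d (l, t))" for l
  have g_pair: "g (2*k + 1) + g (2*k + 2) = of_int (T k) / 4" if "k < m" for k
    using that dm unfolding g_def
    by (simp add: sum_pi8_angle_layer T_def \<Delta>_def diff_divide_distrib algebra_simps)
  have "(\<Sum>q\<in>X. pi8_angle d q) = (\<Sum>l\<in>{1..d}. g l)"
    unfolding X g_def by (simp add: sum.Sigma finL)
  also have "\<dots> = g d + (\<Sum>k<m. g (2*k + 1) + g (2*k + 2))"
    unfolding dm by (rule sum_odd_interval_pairs(1))
  also have "(\<Sum>k<m. g (2*k + 1) + g (2*k + 2)) = (\<Sum>k<m. of_int (T k) / 4)"
    by (intro sum.cong refl g_pair) simp
  also have "g d = of_nat (card (L d)) / 4" unfolding g_def pi8_angle_def by simp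
  also have "of_nat (card (L d)) / 4 + (\<Sum>k<m. of_int (T k) / 4)
      = (of_int (int (card (L d)) + (\<Sum>k<m. T k)) / 4 :: real)"
    by (simp add: sum_divide_distrib add_divide_distrib)
  finally have phase: "(\<Sum>q\<in>X. pi8_angle d q) = of_int (int (card (L d)) + (\<Sum>k<m. T k)) / 4" .
  have "card X = (\<Sum>l\<in>{1..d}. card (L l))" unfolding X by (simp add: card_SigmaI finL)
  also have "\<dots> = card (L 1) + (\<Sum>k<m. card (L (2*k + 2)) + card (L (2*k + 3)))"
    unfolding dm by (rule sum_odd_interval_pairs(2))
  finally have "card X = card (L 1) + (\<Sum>k<m. card (L (2*k + 2)) + card (L (2*k + 3)))" .
  moreover have "even (\<Sum>k<m. card (L (2*k + 2)) + card (L (2*k + 3)))"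
    by (intro dvd_sum pair(3)) simp
  moreover have "\<And>n c s :: nat. n = c + s \<Longrightarrow> even s \<Longrightarrow> int n mod 2 = int c mod 2"
    by presburger
  ultimately have "int (card X) mod 2 = int (card (L 1)) mod 2" by blast
  then have "int (card X) mod 2 = a 0" unfolding a_def by simp
  have "(int (card (L d)) + (\<Sum>k<m. T k)) mod 8 = (int (card (L d)) + (\<Sum>k<m. T k) mod 8) mod 8"
    by (simp add: mod_add_right_eq)
  also have "\<dots> = a 0 mod 8" unfolding sum_T by (simp add: mod_add_right_eq)
  also have "\<dots> = a 0" unfolding a_def by simp
  finally show ?thesis using phase \<open>int (card X) mod 2 = a 0\<close> by metis
qed

lemma mem_code_space_support:
  "\<psi> \<in> code_space S XG ZG \<Longrightarrow> \<psi> x \<noteq> 0 \<Longrightarrow> {q. x q} \<subseteq> S"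
  unfolding code_space_def supported_on_def by blast

lemma mem_code_space_even_card_Z:
  assumes "\<psi> \<in> code_space S XG ZG" "\<psi> x \<noteq> 0" "B \<in> ZG"
  shows "even (card {q \<in> B. x q})"
proof -
  have "pauliZ B \<psi> x = \<psi> x" using assms(1,3) unfolding code_space_def by auto
  then have "(-1::complex) ^ card {q \<in> B. x q} = 1" using assms(2) by (simp add: pauliZ_def)
  then show ?thesis by (cases "even (card {q \<in> B. x q})") auto
qed

lemma cis_pi_quarter_mod_8:
  fixes N :: int
  assumes "N mod 8 = r"
  shows "cis (pi * (of_int N / 4)) = cis (pi * of_int r / 4)"
proof -
  have "N = r + 8 * (N div 8)" using assms by (metis mod_div_mult_eq add.commute mult.commute)
  then have "real_of_int N = real_of_int r + 8 * real_of_int (N div 8)"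
    by (metis of_int_add of_int_mult of_int_numeral)
  then have e: "pi * (of_int N / 4) = pi * of_int r / 4 + 2 * pi * of_int (N div 8)"
    by (simp add: field_simps)
  have "cis (pi * (of_int N / 4)) = cis (pi * of_int r / 4) * cis (2 * pi * of_int (N div 8))"
    unfolding e cis_mult ..
  also have "cis (2 * pi * of_int (N div 8)) = 1" by (rule cis_multiple_2pi) simp
  finally show ?thesis by simp
qed

lemma zrot_pi8_angle:
  assumes "odd d" "valid_edge_choice d e" "\<psi> \<in> stacked_code_space d e"
  shows "zrot (stack_qubits d) (pi8_angle d) \<psi> x
           = (if even (card {q \<in> stack_qubits d. x q}) then 1 else cis (pi / 4)) * \<psi> x"
proof (cases "\<psi> x = 0")
  case False
  let ?X = "{q \<in> stack_qubits d. x q}"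
  note code = assms(3)[unfolded stacked_code_space_def]
  obtain N where N: "(\<Sum>q\<in>?X. pi8_angle d q) = of_int N / 4" "N mod 8 = int (card ?X) mod 2"
    using pi8_angle_sum_mod_8[OF assms(1,2) mem_code_space_support[OF code False]
        mem_code_space_even_card_Z[OF code False]] by blast
  have "cis (pi * (\<Sum>q\<in>?X. pi8_angle d q)) = cis (pi * of_int (int (card ?X) mod 2) / 4)"
    unfolding N(1) by (rule cis_pi_quarter_mod_8[OF N(2)])
  moreover have "int (card ?X) mod 2 = (if even (card ?X) then 0 else 1)" by presburger
  ultimately show ?thesis unfolding zrot_def by simp
qed (simp add: zrot_def)

theorem corollary1:
  fixes d :: nat and e :: "int \<times> int \<Rightarrow> cq set"
  assumes "odd d" and "3 \<le> d" and "valid_edge_choice d e"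
  shows "\<exists>\<phi> :: sq \<Rightarrow> real. \<exists>b :: bool.
           acts_as_logical_phase
             (\<lambda>\<psi>. if b then pauliZ (stack_qubits d) (zrot (stack_qubits d) \<phi> \<psi>)
                   else zrot (stack_qubits d) \<phi> \<psi>)
             (pauliZ (stack_qubits d)) (pi / 4) (stacked_code_space d e)"
proof (intro exI[of _ "pi8_angle d"] exI[of _ False])
  \<comment> \<open>The argument covers \<open>d = 1\<close> as well.\<close>
  let ?S = "stack_qubits d"
  have "zrot ?S (pi8_angle d) \<psi> x
      = (1 + cis (pi / 4)) / 2 * \<psi> x + (1 - cis (pi / 4)) / 2 * pauliZ ?S \<psi> x"
    if "\<psi> \<in> stacked_code_space d e" for \<psi> x
    unfolding zrot_pi8_angle[OF assms(1,3) that] pauliZ_def by (simp add: field_simps)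
  then show "acts_as_logical_phase (\<lambda>\<psi>. if False then pauliZ ?S (zrot ?S (pi8_angle d) \<psi>)
      else zrot ?S (pi8_angle d) \<psi>) (pauliZ ?S) (pi / 4) (stacked_code_space d e)"
    unfolding acts_as_logical_phase_def by simp
qed

end
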